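(* Let $k\geq 1$ and $n\geq 1$ be integers. Then 1. $B_{k,2n}=B_{k,n}\bigl(B_{k,n+1}+(1-k)B_{k,n-1}\bigr)$; 2. $B_{k,2n-1}=B_{k,n}^2+(1-k)B_{k,n-1}^2$.
   Context: For an integer $k\geq 1$, the generalized balancing numbers are defined by $B_{k,0}=0$, $B_{k,1}=1$ and $B_{k,n}=3kB_{k,n-1}+(1-k)B_{k,n-2}$ for $n\geq 2$. *)

theory Defs
  imports Main
begin

fun B :: "int \<Rightarrow> nat \<Rightarrow> int" where
  "B k 0 = 0"
| "B k (Suc 0) = 1"
| "B k (Suc (Suc n)) = 3 * k * B k (Suc n) + (1 - k) * B k n"

end

theory Submission
  imports Defs
begin

text \<open>Both identities are instances of the addition formula
  B(m+n+1) = B(m+1) B(n+1) + (1-k) B(m) B(n), taken with m + 1 and n + 1 equal or adjacent.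
  The addition formula itself holds because, for fixed n, both sides satisfy the defining
  recurrence in m and agree for m = 0, 1.\<close>

lemma B_add:
  "B k (m + n + 1) = B k (m + 1) * B k (n + 1) + (1 - k) * B k m * B k n"
proof (induction k m rule: B.induct)
  case (1 k)
  show ?case by simp
next
  case (2 k)
  show ?case by (cases n) (simp_all add: algebra_simps)
next
  case (3 k m)
  have "B k (Suc (Suc m) + n + 1) = 3 * k * B k (Suc m + n + 1) + (1 - k) * B k (m + n + 1)"
    by simp
  also have "\<dots> = B k (n + 1) * (3 * k * B k (Suc m + 1) + (1 - k) * B k (m + 1))
      + (1 - k) * B k n * (3 * k * B k (Suc m) + (1 - k) * B k m)"
    unfolding "3.IH" by (simp add: algebra_simps)
  also have "\<dots> = B k (Suc (Suc m) + 1) * B k (n + 1) + (1 - k) * B k (Suc (Suc m)) * B k n"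
    by (simp add: algebra_simps)
  finally show ?case .
qed

lemma B_double:
  "B k (2 * n + 2) = B k (n + 1) * (B k (n + 2) + (1 - k) * B k n)"
  using B_add[of k "n + 1" n]
  by (simp del: B.simps add: algebra_simps mult_2 mult_2_right add_2_eq_Suc')

lemma B_double_plus_one:
  "B k (2 * n + 1) = (B k (n + 1))\<^sup>2 + (1 - k) * (B k n)\<^sup>2"
  using B_add[of k n n] by (simp del: B.simps add: mult_2 power2_eq_square)

theorem mainTheorem20:
  fixes k :: int and n :: nat
  assumes "k \<ge> 1" and "n \<ge> 1"
  shows "B k (2 * n) = B k n * (B k (n + 1) + (1 - k) * B k (n - 1)) \<and>
         B k (2 * n - 1) = (B k n)^2 + (1 - k) * (B k (n - 1))^2"
proof -
  obtain m where n: "n = m + 1"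
    using \<open>n \<ge> 1\<close> by (metis le_add_diff_inverse2)
  have indices: "2 * n = 2 * m + 2" "2 * n - 1 = 2 * m + 1" "n + 1 = m + 2" "n - 1 = m"
    using n by simp_all
  show ?thesis
    unfolding indices using B_double[of k m] B_double_plus_one[of k m] by (simp del: B.simps add: n)
qed

end
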